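(* Consider the mixed CAC game (defined in the context) with $\mathcal V_c\neq\emptyset$ and $\mathcal V_a\neq\emptyset$. (1) If $x^*\in\mathcal X$ is a Nash equilibrium, then, writing $z^*=z(x^* )$, $z_c^*=z_c(x^* )$, $z_a^*=z_a(x^* )$, the following hold for every $\epsilon_c\in(0,\tfrac1n]$ and every $\epsilon_a\in(\tfrac1n,\tfrac2n]$: $$ \begin{cases} z_c^*=F_c\!\left(\frac{n}{n-1}(z^*-\epsilon_c)\right),\\[2pt] G_a\!\left(\frac{n}{n-1}(z^*-\epsilon_a)\right)\ \ge\ z_a^*\ \ge\ G_a\!\left(\frac{n}{n-1}z^*\right),\\[2pt] z^*=\alpha z_c^*+(1-\alpha)z_a^*. \end{cases} $$ (2) Conversely, if $z^*\in\{0,\tfrac1n,\dots,1\}$, $z_c^*\in\{0,\tfrac1{n_c},\dots,1\}$ and $z_a^*\in\{0,\tfrac1{n_a},\dots,1\}$ satisfy the three conditions above for every $\epsilon_c\in(0,\tfrac1n]$ and every $\epsilon_a\in(\tfrac1n,\tfrac2n]$, then there exists a Nash equilibrium $x^*\in\mathcal X$ with $z(x^* )=z^*$, $z_c(x^* )=z_c^*$ and $z_a(x^* )=z_a^*$.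
   Context: Let $\mathcal V$ be a finite set of $n\ge 2$ agents, partitioned into disjoint sets $\mathcal V_c$ (coordinating agents) and $\mathcal V_a$ (anti-coordinating agents), $\mathcal V=\mathcal V_c\cup\mathcal V_a$. Set $\delta_i=+1$ if $i\in\mathcal V_c$ and $\delta_i=-1$ if $i\in\mathcal V_a$. Given real weights $d_i$ ($i\in\mathcal V$), the mixed coordination/anti-coordination (CAC) game has action set $\{-1,+1\}$ for every agent, configuration space $\mathcal X=\{-1,+1\}^{\mathcal V}$, and utilities $u_i(x)=\delta_i\big(\sum_{j\neq i}x_ix_j-d_ix_i\big)$. A (pure) Nash equilibrium is an $x\in\mathcal X$ such that $u_i(x)\ge u_i(y_i,x_{-i})$ for every $i\in\mathcal V$ and $y_i\in\{-1,+1\}$. The threshold of agent $i$ is $r_i=\tfrac12+\tfrac{d_i}{2(n-1)}$. Let $n_c=|\mathcal V_c|$, $n_a=|\mathcal V_a|$, $\alpha=n_c/n$. For $x\in\mathcal X$ let $z(x)=\frac1n|\{i\in\mathcal V: x_i=+1\}|$, $z_c(x)=\frac1{n_c}|\{i\in\mathcal V_c: x_i=+1\}|$, $z_a(x)=\frac1{n_a}|\{i\in\mathcal V_a: x_i=+1\}|$. Define $F_c(t)=\frac1{n_c}|\{i\in\mathcal V_c: r_i\le t\}|$ (threshold CDF of coordinating agents) and $G_a(t)=\frac1{n_a}|\{i\in\mathcal V_a: r_i> t\}|$ (threshold complementary CDF of anti-coordinating agents), for $t\in\mathbb R$. *)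

theory Defs
  imports Main "HOL-Library.FuncSet" Complex_Main
begin

definition cac_config :: "'a set \<Rightarrow> ('a \<Rightarrow> real) set" where
  "cac_config V = V \<rightarrow>\<^sub>E {-1, 1}"

definition cac_delta :: "'a set \<Rightarrow> 'a \<Rightarrow> real" where
  "cac_delta Vc i = (if i \<in> Vc then 1 else -1)"

definition cac_utility ::
  "'a set \<Rightarrow> 'a set \<Rightarrow> ('a \<Rightarrow> real) \<Rightarrow> 'a \<Rightarrow> ('a \<Rightarrow> real) \<Rightarrow> real" where
  "cac_utility V Vc d i x =
     cac_delta Vc i * ((\<Sum>j\<in>V - {i}. x i * x j) - d i * x i)"

definition cac_nash ::
  "'a set \<Rightarrow> 'a set \<Rightarrow> ('a \<Rightarrow> real) \<Rightarrow> ('a \<Rightarrow> real) \<Rightarrow> bool" where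
  "cac_nash V Vc d x \<longleftrightarrow> x \<in> cac_config V \<and>
     (\<forall>i\<in>V. \<forall>y\<in>{-1, 1::real}.
        cac_utility V Vc d i x \<ge> cac_utility V Vc d i (x(i := y)))"

definition cac_threshold :: "'a set \<Rightarrow> ('a \<Rightarrow> real) \<Rightarrow> 'a \<Rightarrow> real" where
  "cac_threshold V d i = 1/2 + d i / (2 * (real (card V) - 1))"

definition frac_plus :: "'a set \<Rightarrow> ('a \<Rightarrow> real) \<Rightarrow> real" where
  "frac_plus S x = real (card {i\<in>S. x i = 1}) / real (card S)"

definition F_c :: "'a set \<Rightarrow> 'a set \<Rightarrow> ('a \<Rightarrow> real) \<Rightarrow> real \<Rightarrow> real" where
  "F_c V Vc d t = real (card {i\<in>Vc. cac_threshold V d i \<le> t}) / real (card Vc)"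

definition G_a :: "'a set \<Rightarrow> 'a set \<Rightarrow> ('a \<Rightarrow> real) \<Rightarrow> real \<Rightarrow> real" where
  "G_a V Va d t = real (card {i\<in>Va. cac_threshold V d i > t}) / real (card Va)"

definition cac_conditions ::
  "'a set \<Rightarrow> 'a set \<Rightarrow> 'a set \<Rightarrow> ('a \<Rightarrow> real) \<Rightarrow> real \<Rightarrow> real \<Rightarrow> real \<Rightarrow> bool" where
  "cac_conditions V Vc Va d z zc za \<longleftrightarrow>
     (let n = real (card V) in
      (\<forall>ec. 0 < ec \<and> ec \<le> 1/n \<longrightarrow> zc = F_c V Vc d (n/(n-1) * (z - ec))) \<and>
      (\<forall>ea. 1/n < ea \<and> ea \<le> 2/n \<longrightarrow>
          G_a V Va d (n/(n-1) * (z - ea)) \<ge> za \<and> za \<ge> G_a V Va d (n/(n-1) * z)) \<and>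
      z = (real (card Vc) / n) * zc + (1 - real (card Vc) / n) * za)"

end

theory Submission
  imports Defs
begin

text \<open>Agent i's incentive to play +1 depends only on how many other agents play +1: a
  coordinator prefers +1 iff at least (n-1) r_i of them do, an anti-coordinator iff at most
  that many do. Hence, if k agents play +1, x is an equilibrium iff coordinators playing +1
  have (n-1) r_i \<le> k-1 and those playing -1 have (n-1) r_i \<ge> k, while anti-coordinators
  playing +1 have (n-1) r_i \<ge> k-1 and those playing -1 have (n-1) r_i \<le> k. Scaling the
  arguments of F_c and G_a by n-1 and writing a = n \<epsilon> turns the three conditions into
  statements about these counts. Conversely, given counts satisfying them, let the
  coordinators with (n-1) r_i \<le> k-1 play +1 (the condition for every \<epsilon>_c rules out
  coordinator thresholds strictly between k-1 and k), together with ka anti-coordinators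
  containing all those with (n-1) r_i > k and contained in those with (n-1) r_i \<ge> k-1.\<close>

lemma sum_plus_minus_one:
  fixes x :: "'a \<Rightarrow> real"
  assumes "finite W" and "\<And>j. j \<in> W \<Longrightarrow> x j = 1 \<or> x j = -1"
  shows "(\<Sum>j\<in>W. x j) = 2 * real (card {j\<in>W. x j = 1}) - real (card W)"
proof -
  have "x j = 2 * of_bool (x j = 1) - 1" if "j \<in> W" for j
    using assms(2)[OF that] by auto
  then have "(\<Sum>j\<in>W. x j) = (\<Sum>j\<in>W. 2 * of_bool (x j = 1) - 1)"
    by (rule sum.cong[OF refl])
  also have "\<dots> = 2 * (\<Sum>j\<in>W. of_bool (x j = 1)) - real (card W)"
    by (simp add: sum_subtractf sum_distrib_left)
  also have "(\<Sum>j\<in>W. of_bool (x j = 1)) = real (card {j\<in>W. x j = 1})"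
    using assms(1) by (simp add: Int_def)
  finally show ?thesis .
qed

lemma card_Collect_remove:
  assumes "finite V" and "i \<in> V"
  shows "real (card {j\<in>V - {i}. P j}) = real (card {j\<in>V. P j}) - of_bool (P i)"
proof -
  have "{j\<in>V - {i}. P j} = {j\<in>V. P j} - {i}" by auto
  moreover have "P i \<Longrightarrow> card {j\<in>V. P j} \<ge> 1"
    using assms by (auto simp: Suc_le_eq card_gt_0_iff)
  ultimately show ?thesis
    by (auto simp: card_Diff_singleton_if of_nat_diff assms)
qed

lemma sublevel_set_eq_of_card_eq:
  fixes f :: "'a \<Rightarrow> real"
  assumes "finite A" and "b \<le> c" and "card {i\<in>A. f i \<le> b} = card {i\<in>A. f i \<le> c}"
  shows "{i\<in>A. f i \<le> b} = {i\<in>A. f i \<le> c}"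
proof (rule card_subset_eq)
  show "finite {i\<in>A. f i \<le> c}" using assms(1) by simp
  show "{i\<in>A. f i \<le> b} \<subseteq> {i\<in>A. f i \<le> c}" using assms(2) by auto
qed (rule assms(3))

lemma strict_superlevel_gap:
  fixes f :: "'a \<Rightarrow> real"
  assumes "finite A" and "b < a"
  obtains c where "b \<le> c" and "c < a" and "{i\<in>A. c < f i} = {i\<in>A. a \<le> f i}"
proof
  define c where "c = Max (insert b (f ` {i\<in>A. f i < a}))"
  have fin: "finite (insert b (f ` {i\<in>A. f i < a}))" using assms(1) by simp
  show "b \<le> c" unfolding c_def using fin by simp
  show "c < a" unfolding c_def using fin assms(2) by (subst Max_less_iff) auto
  have "f i \<le> c" if "i \<in> A" "f i < a" for i
    unfolding c_def using fin that by (intro Max_ge) auto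
  then show "{i\<in>A. c < f i} = {i\<in>A. a \<le> f i}"
    using \<open>c < a\<close> by force
qed

lemma obtain_subset_between_with_card:
  assumes "finite L" and "H \<subseteq> L" and "card H \<le> n" and "n \<le> card L"
  obtains B where "H \<subseteq> B" and "B \<subseteq> L" and "card B = n"
proof -
  have "n - card H \<le> card (L - H)"
    using assms by (simp add: card_Diff_subset finite_subset)
  then obtain T where T: "T \<subseteq> L - H" "card T = n - card H"
    by (rule obtain_subset_with_card_n)
  have "card (H \<union> T) = n"
    using T assms by (subst card_Un_disjoint) (auto intro: finite_subset)
  then show ?thesis
    using that[of "H \<union> T"] T assms(2) by blast
qed

lemma all_rescaled_interval:
  fixes n l u :: real
  assumes "0 < n"
  shows "(\<forall>e. l / n < e \<and> e \<le> u / n \<longrightarrow> P (n * e)) \<longleftrightarrow> (\<forall>a. l < a \<and> a \<le> u \<longrightarrow> P a)"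
proof
  assume scaled: "\<forall>e. l / n < e \<and> e \<le> u / n \<longrightarrow> P (n * e)"
  show "\<forall>a. l < a \<and> a \<le> u \<longrightarrow> P a"
  proof (intro allI impI)
    fix a assume "l < a \<and> a \<le> u"
    then have "l / n < a / n \<and> a / n \<le> u / n"
      using assms by (simp add: divide_strict_right_mono divide_right_mono)
    then have "P (n * (a / n))" using scaled by blast
    then show "P a" using assms by simp
  qed
next
  assume unscaled: "\<forall>a. l < a \<and> a \<le> u \<longrightarrow> P a"
  show "\<forall>e. l / n < e \<and> e \<le> u / n \<longrightarrow> P (n * e)"
  proof (intro allI impI)
    fix e assume "l / n < e \<and> e \<le> u / n"
    then have "l < n * e \<and> n * e \<le> u"
      using assms by (simp add: field_simps)
    then show "P (n * e)" using unscaled by blast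
  qed
qed

lemma fraction_mixture_iff:
  fixes p q k kc ka :: nat
  assumes "0 < p" and "0 < q"
  shows "real k / (real p + real q) = real p / (real p + real q) * (real kc / real p)
      + (1 - real p / (real p + real q)) * (real ka / real q) \<longleftrightarrow> k = kc + ka"
proof -
  have "1 - real p / (real p + real q) = real q / (real p + real q)"
    using assms by (simp add: field_simps)
  then have "real p / (real p + real q) * (real kc / real p)
      + (1 - real p / (real p + real q)) * (real ka / real q) = (real kc + real ka) / (real p + real q)"
    using assms by (simp add: add_divide_distrib)
  then show ?thesis
    using assms by (simp flip: of_nat_add)
qed

lemma cac_utility_fun_upd:
  assumes "i \<in> V"
  shows "cac_utility V Vc d i (x(i := y)) = cac_delta Vc i * y * ((\<Sum>j\<in>V - {i}. x j) - d i)"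
proof -
  have "(\<Sum>j\<in>V - {i}. (x(i := y)) i * (x(i := y)) j) = y * (\<Sum>j\<in>V - {i}. x j)"
    by (simp add: sum_distrib_left)
  then show ?thesis unfolding cac_utility_def by (simp add: algebra_simps)
qed

text \<open>(n-1) r_i = (n-1)/2 + d_i/2 is the number of other agents playing +1 at which
  agent i is indifferent between its two actions.\<close>

definition cac_threshold_count :: "'a set \<Rightarrow> ('a \<Rightarrow> real) \<Rightarrow> 'a \<Rightarrow> real" where
  "cac_threshold_count V d i = (real (card V) - 1) * cac_threshold V d i"

lemma cac_best_response_iff:
  assumes "finite V" and "card V \<ge> 2" and "x \<in> cac_config V" and "i \<in> V"
  shows "(\<forall>y\<in>{-1, 1::real}. cac_utility V Vc d i (x(i := y)) \<le> cac_utility V Vc d i x) \<longleftrightarrow>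
    0 \<le> cac_delta Vc i * x i * (real (card {j\<in>V - {i}. x j = 1}) - cac_threshold_count V d i)"
proof -
  define b where "b = real (card {j\<in>V - {i}. x j = 1}) - cac_threshold_count V d i"
  have pm: "\<And>j. j \<in> V \<Longrightarrow> x j = 1 \<or> x j = -1"
    using assms(3) unfolding cac_config_def by auto
  have "real (card (V - {i})) = real (card V) - 1"
    using assms(1,2,4) by (simp add: of_nat_diff)
  moreover have "cac_threshold_count V d i = (real (card V) - 1) / 2 + d i / 2"
    using assms(2) unfolding cac_threshold_count_def cac_threshold_def by (simp add: field_simps)
  ultimately have gain: "(\<Sum>j\<in>V - {i}. x j) - d i = 2 * b"
    unfolding b_def using sum_plus_minus_one[of "V - {i}" x] assms(1) pm by (simp add: field_simps)
  let ?\<delta> = "cac_delta Vc i"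
  have "cac_utility V Vc d i x = cac_utility V Vc d i (x(i := x i))" by simp
  then have "(\<forall>y\<in>{-1, 1::real}. cac_utility V Vc d i (x(i := y)) \<le> cac_utility V Vc d i x) \<longleftrightarrow>
      (\<forall>y\<in>{-1, 1::real}. ?\<delta> * y * (2 * b) \<le> ?\<delta> * x i * (2 * b))"
    by (simp only: cac_utility_fun_upd[OF assms(4)] gain)
  also have "\<dots> \<longleftrightarrow> 0 \<le> ?\<delta> * x i * (2 * b)"
    using pm[OF assms(4)] by auto
  also have "\<dots> \<longleftrightarrow> 0 \<le> ?\<delta> * x i * b"
    by (simp add: mult_ac)
  finally show ?thesis unfolding b_def .
qed

lemma cac_nash_iff:
  fixes x d :: "'a \<Rightarrow> real"
  assumes "finite V" and "card V \<ge> 2" and "Vc \<inter> Va = {}" and "Vc \<union> Va = V"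
  defines "m \<equiv> real (card {j\<in>V. x j = 1})" and "s \<equiv> cac_threshold_count V d"
  shows "cac_nash V Vc d x \<longleftrightarrow> x \<in> cac_config V \<and>
    (\<forall>i\<in>Vc. (x i = 1 \<longrightarrow> s i \<le> m - 1) \<and> (x i = -1 \<longrightarrow> m \<le> s i)) \<and>
    (\<forall>i\<in>Va. (x i = 1 \<longrightarrow> m - 1 \<le> s i) \<and> (x i = -1 \<longrightarrow> s i \<le> m))"
proof (cases "x \<in> cac_config V")
  case config: True
  have pm: "x i = 1 \<or> x i = -1" if "i \<in> V" for i
    using config that unfolding cac_config_def by auto
  have "(\<forall>y\<in>{-1, 1::real}. cac_utility V Vc d i (x(i := y)) \<le> cac_utility V Vc d i x) \<longleftrightarrow>
      (i \<in> Vc \<longrightarrow> (x i = 1 \<longrightarrow> s i \<le> m - 1) \<and> (x i = -1 \<longrightarrow> m \<le> s i)) \<and>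
      (i \<in> Va \<longrightarrow> (x i = 1 \<longrightarrow> m - 1 \<le> s i) \<and> (x i = -1 \<longrightarrow> s i \<le> m))"
    if "i \<in> V" for i
    using pm[OF that] assms(3,4) that
    unfolding cac_best_response_iff[OF assms(1,2) config that] card_Collect_remove[OF assms(1) that]
      cac_delta_def m_def s_def
    by auto
  then show ?thesis
    using config assms(4) unfolding cac_nash_def by auto
qed (simp add: cac_nash_def)

lemma F_c_rescaled:
  assumes "card V \<ge> 2"
  shows "F_c V Vc d (real (card V) / (real (card V) - 1) * w)
    = real (card {i\<in>Vc. cac_threshold_count V d i \<le> real (card V) * w}) / real (card Vc)"
proof -
  have "real (card V) - 1 > 0" using assms by simp
  then show ?thesis
    unfolding F_c_def cac_threshold_count_def by (simp add: field_simps)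
qed

lemma G_a_rescaled:
  assumes "card V \<ge> 2"
  shows "G_a V Va d (real (card V) / (real (card V) - 1) * w)
    = real (card {i\<in>Va. real (card V) * w < cac_threshold_count V d i}) / real (card Va)"
proof -
  have "real (card V) - 1 > 0" using assms by simp
  then show ?thesis
    unfolding G_a_def cac_threshold_count_def by (simp add: field_simps)
qed

text \<open>The conditions of cac_conditions at z = k/n, z_c = kc/n_c, z_a = ka/n_a, after
  multiplying the thresholds by n-1 and substituting a = n \<epsilon>.\<close>

definition cac_count_conditions ::
  "'a set \<Rightarrow> 'a set \<Rightarrow> 'a set \<Rightarrow> ('a \<Rightarrow> real) \<Rightarrow> nat \<Rightarrow> nat \<Rightarrow> nat \<Rightarrow> bool" where
  "cac_count_conditions V Vc Va d k kc ka \<longleftrightarrow>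
     (\<forall>a. 0 < a \<and> a \<le> 1 \<longrightarrow> card {i\<in>Vc. cac_threshold_count V d i \<le> real k - a} = kc) \<and>
     (\<forall>a. 1 < a \<and> a \<le> 2 \<longrightarrow> ka \<le> card {i\<in>Va. real k - a < cac_threshold_count V d i}) \<and>
     card {i\<in>Va. real k < cac_threshold_count V d i} \<le> ka \<and>
     k = kc + ka"

lemma cac_conditions_iff_count_conditions:
  assumes "finite V" and "card V \<ge> 2" and "Vc \<inter> Va = {}" and "Vc \<union> Va = V"
    and "Vc \<noteq> {}" and "Va \<noteq> {}"
  shows "cac_conditions V Vc Va d (real k / real (card V)) (real kc / real (card Vc)) (real ka / real (card Va))
    \<longleftrightarrow> cac_count_conditions V Vc Va d k kc ka"
proof -
  define n where "n = real (card V)"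
  have n: "0 < n" "n = real (card Vc) + real (card Va)"
    using assms card_Un_disjoint[of Vc Va] unfolding n_def by auto
  have pos: "0 < real (card Vc)" "0 < real (card Va)"
    using assms by (auto simp: card_gt_0_iff intro: finite_subset)
  have rescale: "n * (real k / n - e) = real k - n * e" "n * (real k / n) = real k" for e
    using n by (simp_all add: field_simps)
  have div_eq: "real b / real (card Vc) = real c / real (card Vc) \<longleftrightarrow> b = c" for b c
    using pos by simp
  have div_le: "real b / real (card Va) \<le> real c / real (card Va) \<longleftrightarrow> b \<le> c" for b c
    using pos by (simp add: divide_le_cancel)
  have coordinators: "(\<forall>e. 0 < e \<and> e \<le> 1 / n \<longrightarrow>
        real kc / real (card Vc) = F_c V Vc d (n / (n - 1) * (real k / n - e)))
      \<longleftrightarrow> (\<forall>a. 0 < a \<and> a \<le> 1 \<longrightarrow> card {i\<in>Vc. cac_threshold_count V d i \<le> real k - a} = kc)"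
    unfolding F_c_rescaled[OF assms(2), folded n_def] rescale div_eq
    using all_rescaled_interval[OF n(1), of 0 1
        "\<lambda>a. kc = card {i\<in>Vc. cac_threshold_count V d i \<le> real k - a}"]
    by (simp add: eq_commute[of kc])
  have anti_coordinators: "(\<forall>e. 1 / n < e \<and> e \<le> 2 / n \<longrightarrow>
        G_a V Va d (n / (n - 1) * (real k / n - e)) \<ge> real ka / real (card Va) \<and>
        real ka / real (card Va) \<ge> G_a V Va d (n / (n - 1) * (real k / n)))
      \<longleftrightarrow> (\<forall>a. 1 < a \<and> a \<le> 2 \<longrightarrow> ka \<le> card {i\<in>Va. real k - a < cac_threshold_count V d i}) \<and>
          card {i\<in>Va. real k < cac_threshold_count V d i} \<le> ka"
  proof -
    have "1 / n < 2 / n \<and> 2 / n \<le> 2 / n" using n by (simp add: divide_strict_right_mono)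
    then show ?thesis
      unfolding G_a_rescaled[OF assms(2), folded n_def] rescale div_le
      using all_rescaled_interval[OF n(1), of 1 2
          "\<lambda>a. ka \<le> card {i\<in>Va. real k - a < cac_threshold_count V d i}"]
      by blast
  qed
  have mean: "real k / n = real (card Vc) / n * (real kc / real (card Vc))
      + (1 - real (card Vc) / n) * (real ka / real (card Va)) \<longleftrightarrow> k = kc + ka"
    using fraction_mixture_iff[of "card Vc" "card Va" k kc ka] pos n(2) by simp
  show ?thesis
    unfolding cac_conditions_def cac_count_conditions_def Let_def n_def[symmetric]
      coordinators anti_coordinators mean by (simp only: conj_assoc)
qed

lemma cac_nash_count_conditions:
  assumes "finite V" and "card V \<ge> 2" and "Vc \<inter> Va = {}" and "Vc \<union> Va = V"
    and "cac_nash V Vc d x"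
  shows "cac_count_conditions V Vc Va d
    (card {j\<in>V. x j = 1}) (card {j\<in>Vc. x j = 1}) (card {j\<in>Va. x j = 1})"
proof -
  define m where "m = real (card {j\<in>V. x j = 1})"
  define s where "s = cac_threshold_count V d"
  have config: "x \<in> cac_config V"
    and coord: "\<And>i. i \<in> Vc \<Longrightarrow> (x i = 1 \<longrightarrow> s i \<le> m - 1) \<and> (x i = -1 \<longrightarrow> m \<le> s i)"
    and anti: "\<And>i. i \<in> Va \<Longrightarrow> (x i = 1 \<longrightarrow> m - 1 \<le> s i) \<and> (x i = -1 \<longrightarrow> s i \<le> m)"
    using assms(5) unfolding cac_nash_iff[OF assms(1-4)] m_def s_def by auto
  have pm: "x i = 1 \<or> x i = -1" if "i \<in> V" for i
    using config that unfolding cac_config_def by auto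
  have fin: "finite Vc" "finite Va" using assms(1,4) by auto
  have "s i \<le> m - a \<longleftrightarrow> x i = 1" if "i \<in> Vc" "0 < a" "a \<le> 1" for i a
    using coord[OF that(1)] pm[of i] that assms(4) by (cases "x i = 1") auto
  then have "card {i\<in>Vc. s i \<le> m - a} = card {j\<in>Vc. x j = 1}" if "0 < a" "a \<le> 1" for a
    using that by (metis (mono_tags, lifting) Collect_cong)
  moreover have "card {j\<in>Va. x j = 1} \<le> card {i\<in>Va. m - a < s i}" if "1 < a" for a
  proof (rule card_mono)
    show "{j\<in>Va. x j = 1} \<subseteq> {i\<in>Va. m - a < s i}"
    proof
      fix j assume "j \<in> {j\<in>Va. x j = 1}"
      then show "j \<in> {i\<in>Va. m - a < s i}" using anti[of j] that by auto
    qed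
  qed (use fin in simp)
  moreover have "card {i\<in>Va. m < s i} \<le> card {j\<in>Va. x j = 1}"
  proof (rule card_mono)
    show "{i\<in>Va. m < s i} \<subseteq> {j\<in>Va. x j = 1}"
    proof
      fix j assume "j \<in> {i\<in>Va. m < s i}"
      then show "j \<in> {j\<in>Va. x j = 1}" using anti[of j] pm[of j] assms(4) by auto
    qed
  qed (use fin in simp)
  moreover have "{j\<in>V. x j = 1} = {j\<in>Vc. x j = 1} \<union> {j\<in>Va. x j = 1}"
    using assms(4) by auto
  then have "card {j\<in>V. x j = 1} = card {j\<in>Vc. x j = 1} + card {j\<in>Va. x j = 1}"
    using fin assms(3) by (simp add: card_Un_disjoint disjoint_iff)
  ultimately show ?thesis
    unfolding cac_count_conditions_def m_def[symmetric] s_def[symmetric] by blast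
qed

lemma cac_count_conditions_coordinators:
  assumes "finite Vc" and "cac_count_conditions V Vc Va d k kc ka"
  shows "card {i\<in>Vc. cac_threshold_count V d i \<le> real k - 1} = kc"
    and "\<And>i. i \<in> Vc \<Longrightarrow> cac_threshold_count V d i \<le> real k - 1 \<or> real k \<le> cac_threshold_count V d i"
proof -
  let ?s = "cac_threshold_count V d"
  have counts: "card {i\<in>Vc. ?s i \<le> real k - a} = kc" if "0 < a" "a \<le> 1" for a
    using assms(2) that unfolding cac_count_conditions_def by blast
  then show "card {i\<in>Vc. ?s i \<le> real k - 1} = kc" by simp
  fix i assume i: "i \<in> Vc"
  show "?s i \<le> real k - 1 \<or> real k \<le> ?s i"
  proof (rule ccontr)
    assume "\<not> ?thesis"
    then have between: "real k - 1 < ?s i" "?s i < real k" by auto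
    have "{j\<in>Vc. ?s j \<le> real k - 1} = {j\<in>Vc. ?s j \<le> ?s i}"
      using between counts[of 1] counts[of "real k - ?s i"]
      by (intro sublevel_set_eq_of_card_eq assms(1)) auto
    then have "?s i \<le> real k - 1" using i by blast
    then show False using between by simp
  qed
qed

lemma cac_count_conditions_anti_coordinators:
  assumes "finite Va" and "cac_count_conditions V Vc Va d k kc ka"
  shows "card {i\<in>Va. real k < cac_threshold_count V d i} \<le> ka"
    and "ka \<le> card {i\<in>Va. real k - 1 \<le> cac_threshold_count V d i}"
proof -
  let ?s = "cac_threshold_count V d"
  show "card {i\<in>Va. real k < ?s i} \<le> ka"
    using assms(2) unfolding cac_count_conditions_def by blast
  obtain c where c: "real k - 2 \<le> c" "c < real k - 1"
    and level: "{i\<in>Va. c < ?s i} = {i\<in>Va. real k - 1 \<le> ?s i}"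
    using strict_superlevel_gap[OF assms(1), of "real k - 2" "real k - 1" ?s] by auto
  have "ka \<le> card {i\<in>Va. real k - a < ?s i}" if "1 < a" "a \<le> 2" for a
    using assms(2) that unfolding cac_count_conditions_def by blast
  from this[of "real k - c"] c show "ka \<le> card {i\<in>Va. real k - 1 \<le> ?s i}"
    using level by simp
qed

lemma cac_count_conditions_obtain_nash:
  assumes "finite V" and "card V \<ge> 2" and "Vc \<inter> Va = {}" and "Vc \<union> Va = V"
    and "cac_count_conditions V Vc Va d k kc ka"
  obtains x where "cac_nash V Vc d x" and "card {j\<in>V. x j = 1} = k"
    and "card {j\<in>Vc. x j = 1} = kc" and "card {j\<in>Va. x j = 1} = ka"
proof -
  let ?s = "cac_threshold_count V d"
  have fin: "finite Vc" "finite Va" using assms(1,4) by auto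
  define Ac where "Ac = {i\<in>Vc. ?s i \<le> real k - 1}"
  have card_Ac: "card Ac = kc" and gap: "\<And>i. i \<in> Vc - Ac \<Longrightarrow> real k \<le> ?s i"
    using cac_count_conditions_coordinators[OF fin(1) assms(5)] unfolding Ac_def by auto
  have "finite {i\<in>Va. real k - 1 \<le> ?s i}" "{i\<in>Va. real k < ?s i} \<subseteq> {i\<in>Va. real k - 1 \<le> ?s i}"
    using fin(2) by auto
  then obtain B where HB: "{i\<in>Va. real k < ?s i} \<subseteq> B" and BL: "B \<subseteq> {i\<in>Va. real k - 1 \<le> ?s i}"
    and card_B: "card B = ka"
    using cac_count_conditions_anti_coordinators[OF fin(2) assms(5)]
    by (rule obtain_subset_between_with_card)
  define x :: "'a \<Rightarrow> real" where
    "x = (\<lambda>i. if i \<in> V then if i \<in> Ac \<union> B then 1 else -1 else undefined)"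
  have sub: "Ac \<subseteq> Vc" "B \<subseteq> Va" unfolding Ac_def using BL by auto
  have x_Vc: "x i = (if i \<in> Ac then 1 else -1)" if "i \<in> Vc" for i
    using that sub assms(3,4) unfolding x_def by auto
  have x_Va: "x i = (if i \<in> B then 1 else -1)" if "i \<in> Va" for i
    using that sub assms(3,4) unfolding x_def by auto
  have plus_Vc: "{j\<in>Vc. x j = 1} = Ac" and plus_Va: "{j\<in>Va. x j = 1} = B"
    using sub x_Vc x_Va by (auto split: if_splits)
  have "{j\<in>V. x j = 1} = Ac \<union> B"
    using plus_Vc plus_Va assms(4) by auto
  moreover have "card (Ac \<union> B) = card Ac + card B"
    using sub fin assms(3) by (intro card_Un_disjoint) (auto intro: finite_subset)
  moreover have "k = kc + ka"
    using assms(5) unfolding cac_count_conditions_def by blast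
  ultimately have plus_V: "card {j\<in>V. x j = 1} = k"
    by (simp add: card_Ac card_B)
  have config: "x \<in> cac_config V"
    unfolding cac_config_def x_def by (simp add: PiE_def extensional_def)
  have coordinators: "\<forall>i\<in>Vc. (x i = 1 \<longrightarrow> ?s i \<le> real k - 1) \<and> (x i = -1 \<longrightarrow> real k \<le> ?s i)"
    using gap x_Vc unfolding Ac_def by simp
  have anti_coordinators:
    "\<forall>i\<in>Va. (x i = 1 \<longrightarrow> real k - 1 \<le> ?s i) \<and> (x i = -1 \<longrightarrow> ?s i \<le> real k)"
    using BL HB x_Va by force
  have nash: "cac_nash V Vc d x"
    unfolding cac_nash_iff[OF assms(1-4)] plus_V by (intro conjI config coordinators anti_coordinators)
  show ?thesis
    by (rule that[OF nash]) (simp_all add: plus_V plus_Vc plus_Va card_Ac card_B)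
qed

theorem theorem1:
  fixes V Vc Va :: "'a set" and d :: "'a \<Rightarrow> real"
  assumes "finite V" and "card V \<ge> 2"
    and "Vc \<inter> Va = {}" and "Vc \<union> Va = V"
    and "Vc \<noteq> {}" and "Va \<noteq> {}"
  shows "(\<forall>x. cac_nash V Vc d x \<longrightarrow>
            cac_conditions V Vc Va d (frac_plus V x) (frac_plus Vc x) (frac_plus Va x))
       \<and> (\<forall>z zc za.
            z \<in> {real k / real (card V) | k. k \<le> card V} \<and>
            zc \<in> {real k / real (card Vc) | k. k \<le> card Vc} \<and>
            za \<in> {real k / real (card Va) | k. k \<le> card Va} \<and>
            cac_conditions V Vc Va d z zc za \<longrightarrow>
            (\<exists>x. cac_nash V Vc d x \<and> frac_plus V x = z \<and>
                 frac_plus Vc x = zc \<and> frac_plus Va x = za))"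
proof (intro conjI allI impI)
  fix x assume "cac_nash V Vc d x"
  then show "cac_conditions V Vc Va d (frac_plus V x) (frac_plus Vc x) (frac_plus Va x)"
    unfolding frac_plus_def cac_conditions_iff_count_conditions[OF assms]
    by (rule cac_nash_count_conditions[OF assms(1-4)])
next
  fix z zc za
  assume "z \<in> {real k / real (card V) | k. k \<le> card V} \<and>
    zc \<in> {real k / real (card Vc) | k. k \<le> card Vc} \<and>
    za \<in> {real k / real (card Va) | k. k \<le> card Va} \<and>
    cac_conditions V Vc Va d z zc za"
  then obtain k kc ka where z: "z = real k / real (card V)" and zc: "zc = real kc / real (card Vc)"
    and za: "za = real ka / real (card Va)" and "cac_conditions V Vc Va d z zc za"
    by blast
  then have "cac_count_conditions V Vc Va d k kc ka"
    using cac_conditions_iff_count_conditions[OF assms] by simp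
  then obtain x where "cac_nash V Vc d x" and "card {j\<in>V. x j = 1} = k"
    and "card {j\<in>Vc. x j = 1} = kc" and "card {j\<in>Va. x j = 1} = ka"
    by (rule cac_count_conditions_obtain_nash[OF assms(1-4)])
  then show "\<exists>x. cac_nash V Vc d x \<and> frac_plus V x = z \<and> frac_plus Vc x = zc \<and> frac_plus Va x = za"
    unfolding z zc za frac_plus_def by blast
qed

end
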